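(* Let $\mathsf{P}\ge 0$ be a nonnegative random variable with Laplace transform $\mathcal{L}_{\mathsf{P}}(s)=\mathbb{E}[e^{-s\mathsf{P}}]$, and let $\tilde{\mathsf{J}}$ be a Gamma random variable with shape $k>0$ and scale $\theta>0$, i.e. $\mathbb{P}(\tilde{\mathsf{J}}\le z)=1-\Gamma(k,z/\theta)/\Gamma(k)$ for $z\ge0$, independent of $\mathsf{P}$. For $s_0>0$ and integer $m\ge0$ define $$\mathcal{L}^{(m)}_{\mathsf{P}}(s_0)=\frac{\partial^m}{\partial s^m}\mathcal{L}_{\mathsf{P}}(-s)\Big|_{s=-s_0}=\mathbb{E}\big[\mathsf{P}^m e^{-s_0\mathsf{P}}\big],$$ and for an integer $n\ge 0$ let $S(n)=\sum_{m=0}^{n-1}\mathcal{L}^{(m)}_{\mathsf{P}}\big(\tfrac{1}{\theta\beta}\big)\frac{(\theta\beta)^{-m}}{m!}$ (with $S(0)=0$). Then for every $\beta>0$, $$S(\lfloor k\rfloor)\;\le\;\mathbb{P}\big(\mathsf{P}/\tilde{\mathsf{J}}\le\beta\big)\;\le\;S(\lceil k\rceil).$$ In particular, with $\mathsf{P}$ the useful received power and $\tilde{\mathsf{J}}$ the Gamma approximation of the interference-plus-noise $\mathsf{J}_{\mathcal C}+\mathsf{J}_{\bar{\mathcal C}}+1/\eta$, this bounds the $\mathtt{SINR}$ distribution $\mathbb{P}(\mathtt{SINR}\le\beta)$.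
   Context: $\Gamma(a,x)=\int_x^\infty t^{a-1}e^{-t}\,dt$ denotes the upper incomplete Gamma function and $\Gamma(a)=\Gamma(a,0)$. In the paper's model, $\mathtt{SINR}=\mathsf{P}/(\mathsf{J}_{\mathcal C}+\mathsf{J}_{\bar{\mathcal C}}+1/\eta)$ and the denominator is replaced by an independent Gamma random variable $\tilde{\mathsf J}$ with the parameters $k,\theta$ obtained by matching its first two moments (see the companion statement of Proposition 1); here $\mathsf P=\sum_{i:\mathsf x_i\in\Phi\cap b(o,D)}\mathsf g_i\|\mathsf x_i\|^{-\alpha}\mathbf 1(\mathsf g_i\|\mathsf x_i\|^{-\alpha}\ge T)$ for a Poisson point process $\Phi=\{\mathsf x_i\}$ of base stations in $\mathbb R^2$ with i.i.d. marks $\mathsf g_i\ge0$, path loss exponent $\alpha>2$, cooperation radius $D>0$ and activation threshold $T\ge 0$. *)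

theory Defs
  imports "HOL-Probability.Probability"
begin

definition upper_inc_Gamma :: "real \<Rightarrow> real \<Rightarrow> real" where
  "upper_inc_Gamma a x = (LINT t:{x..}|lborel. t powr (a - 1) * exp (- t))"

text \<open>m-th derivative of s \<mapsto> L_P(-s) evaluated at s = -s0, i.e. E[P^m exp(-s0 P)].\<close>
definition laplace_deriv :: "'a measure \<Rightarrow> ('a \<Rightarrow> real) \<Rightarrow> nat \<Rightarrow> real \<Rightarrow> real" where
  "laplace_deriv M P m s0 = (\<integral>\<omega>. (P \<omega>) ^ m * exp (- s0 * P \<omega>) \<partial>M)"

definition S_sum :: "'a measure \<Rightarrow> ('a \<Rightarrow> real) \<Rightarrow> real \<Rightarrow> real \<Rightarrow> nat \<Rightarrow> real" where
  "S_sum M P \<theta> \<beta> n =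
     (\<Sum>m<n. laplace_deriv M P m (1 / (\<theta> * \<beta>)) * (\<theta> * \<beta>) powi (- int m) / fact m)"

end

theory Submission
  imports Defs
begin

text \<open>Conditionally on \<open>P = p\<close>, the event \<open>P / J \<le> \<beta>\<close> is (up to a null set) \<open>J \<ge> p / \<beta>\<close>, whose
  probability is the regularized upper incomplete Gamma function \<open>Q(k, p / (\<theta> \<beta>))\<close>. Two facts
  about \<open>Q(a, y)\<close> drive the bounds: it is nondecreasing in the shape \<open>a\<close>, because the Gamma
  density of shape \<open>b\<close> is that of shape \<open>a\<close> times the increasing factor \<open>t\<^sup>b\<^sup>-\<^sup>a\<close>; and for an
  integer shape \<open>n\<close> it is the Poisson sum \<open>e\<^sup>-\<^sup>y \<Sum>\<^sub>m\<^sub><\<^sub>n y\<^sup>m / m!\<close>. Sandwiching \<open>k\<close> between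
  \<open>\<lfloor>k\<rfloor>\<close> and \<open>\<lceil>k\<rceil>\<close> and integrating over \<open>P\<close> (by independence) turns the Poisson sums into
  \<open>S(\<lfloor>k\<rfloor>)\<close> and \<open>S(\<lceil>k\<rceil>)\<close>.\<close>

definition Gamma_integral_on :: "real \<Rightarrow> real set \<Rightarrow> ennreal" where
  "Gamma_integral_on a S = (\<integral>\<^sup>+ t. ennreal (t powr (a - 1) * exp (- t)) * indicator S t \<partial>lborel)"

lemma Gamma_integral_on_nonneg_eq_Gamma:
  "a > 0 \<Longrightarrow> Gamma_integral_on a {0..} = ennreal (Gamma a)"
  unfolding Gamma_integral_on_def Gamma_conv_nn_integral_real
  by (intro nn_integral_cong) (auto split: split_indicator simp: exp_minus divide_inverse)

lemma Gamma_integral_on_mono: "S \<subseteq> T \<Longrightarrow> Gamma_integral_on a S \<le> Gamma_integral_on a T"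
  unfolding Gamma_integral_on_def
  by (intro nn_integral_mono mult_left_mono) (auto split: split_indicator)

lemma Gamma_integral_on_finite: "a > 0 \<Longrightarrow> S \<subseteq> {0..} \<Longrightarrow> Gamma_integral_on a S < \<infinity>"
  using Gamma_integral_on_mono[of S "{0..}" a] Gamma_integral_on_nonneg_eq_Gamma[of a]
  by (simp add: top.not_eq_extremum le_less_trans)

lemma Gamma_integral_on_Un:
  "S \<in> sets borel \<Longrightarrow> T \<in> sets borel \<Longrightarrow> S \<inter> T = {} \<Longrightarrow>
    Gamma_integral_on a (S \<union> T) = Gamma_integral_on a S + Gamma_integral_on a T"
  unfolding Gamma_integral_on_def
  by (subst nn_integral_add[symmetric]) (auto intro!: nn_integral_cong split: split_indicator)

lemma Gamma_integral_on_le_scaled: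
  assumes "S \<in> sets borel" and "\<And>t. t \<in> S \<Longrightarrow> t powr (b - a) \<le> r"
  shows "Gamma_integral_on b S \<le> ennreal r * Gamma_integral_on a S"
proof -
  have "ennreal (t powr (b - 1) * exp (- t)) \<le> ennreal r * ennreal (t powr (a - 1) * exp (- t))"
    if "t \<in> S" for t
  proof -
    have "t powr (b - 1) * exp (- t) = t powr (b - a) * (t powr (a - 1) * exp (- t))"
      by (simp add: powr_add[symmetric])
    also have "\<dots> \<le> r * (t powr (a - 1) * exp (- t))"
      using assms(2)[OF that] by (intro mult_right_mono) auto
    moreover have "0 \<le> r"
      using assms(2)[OF that] by (meson order_trans powr_ge_zero)
    ultimately show ?thesis
      by (simp add: ennreal_mult'[symmetric] ennreal_leI)
  qed
  then show ?thesis
    unfolding Gamma_integral_on_def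
    by (subst nn_integral_cmult[symmetric])
      (use assms(1) in \<open>auto intro!: nn_integral_mono split: split_indicator\<close>)
qed

lemma Gamma_integral_on_ge_scaled:
  assumes "S \<in> sets borel" and "\<And>t. t \<in> S \<Longrightarrow> r \<le> t powr (b - a)"
  shows "ennreal r * Gamma_integral_on a S \<le> Gamma_integral_on b S"
proof -
  have "ennreal r * ennreal (t powr (a - 1) * exp (- t)) \<le> ennreal (t powr (b - 1) * exp (- t))"
    if "t \<in> S" for t
  proof -
    have "max 0 r * (t powr (a - 1) * exp (- t)) \<le> t powr (b - a) * (t powr (a - 1) * exp (- t))"
      using assms(2)[OF that] by (intro mult_right_mono) auto
    also have "\<dots> = t powr (b - 1) * exp (- t)"
      by (simp add: powr_add[symmetric])
    finally show ?thesis
      by (metis ennreal_leI ennreal_max_0 ennreal_mult' max.cobounded1)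
  qed
  then show ?thesis
    unfolding Gamma_integral_on_def
    by (subst nn_integral_cmult[symmetric])
      (use assms(1) in \<open>auto intro!: nn_integral_mono split: split_indicator\<close>)
qed

lemma upper_inc_Gamma_nonneg: "0 \<le> upper_inc_Gamma a y"
  unfolding upper_inc_Gamma_def set_lebesgue_integral_def
  by (intro integral_nonneg_AE) auto

lemma ennreal_upper_inc_Gamma:
  assumes "a > 0" "y \<ge> 0"
  shows "ennreal (upper_inc_Gamma a y) = Gamma_integral_on a {y..}"
proof -
  have eq: "Gamma_integral_on a {y..}
      = (\<integral>\<^sup>+ t. ennreal (indicator {y..} t *\<^sub>R (t powr (a - 1) * exp (- t))) \<partial>lborel)"
    unfolding Gamma_integral_on_def by (intro nn_integral_cong) (auto split: split_indicator)
  have "integrable lborel (\<lambda>t. indicator {y..} t *\<^sub>R (t powr (a - 1) * exp (- t)))"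
    using Gamma_integral_on_finite[of a "{y..}"] assms eq by (intro integrableI_nonneg) auto
  then show ?thesis
    unfolding eq upper_inc_Gamma_def set_lebesgue_integral_def
    by (intro nn_integral_eq_integral[symmetric]) auto
qed

lemma
  assumes "a > 0" "y \<ge> 0"
  shows upper_inc_Gamma_le_Gamma: "upper_inc_Gamma a y \<le> Gamma a"
    and Gamma_integral_on_Ico: "Gamma_integral_on a {0..<y} = ennreal (Gamma a - upper_inc_Gamma a y)"
proof -
  have "Gamma_integral_on a {0..<y} < \<infinity>"
    by (rule Gamma_integral_on_finite) (use assms in auto)
  then obtain L where L: "Gamma_integral_on a {0..<y} = ennreal L" "L \<ge> 0"
    by (cases "Gamma_integral_on a {0..<y}") auto
  have "{0..} = {0..<y} \<union> {y..}"
    using assms(2) by auto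
  then have "ennreal (Gamma a) = Gamma_integral_on a ({0..<y} \<union> {y..})"
    using Gamma_integral_on_nonneg_eq_Gamma[OF assms(1)] by simp
  also have "\<dots> = Gamma_integral_on a {0..<y} + Gamma_integral_on a {y..}"
    by (rule Gamma_integral_on_Un) auto
  finally have "ennreal (Gamma a) = ennreal L + ennreal (upper_inc_Gamma a y)"
    using ennreal_upper_inc_Gamma[OF assms] L by simp
  then have "Gamma a = L + upper_inc_Gamma a y"
    using L(2) upper_inc_Gamma_nonneg Gamma_real_pos[OF assms(1)]
    by (simp del: ennreal_plus add: ennreal_plus[symmetric])
  then show "upper_inc_Gamma a y \<le> Gamma a"
    and "Gamma_integral_on a {0..<y} = ennreal (Gamma a - upper_inc_Gamma a y)"
    using L by auto
qed

lemma upper_inc_Gamma_0: "a > 0 \<Longrightarrow> upper_inc_Gamma a 0 = Gamma a"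
  using Gamma_integral_on_Ico[of a 0] upper_inc_Gamma_le_Gamma[of a 0]
  by (simp add: Gamma_integral_on_def)

definition upper_reg_Gamma :: "real \<Rightarrow> real \<Rightarrow> real" where
  "upper_reg_Gamma a y = upper_inc_Gamma a y / Gamma a"

lemma upper_reg_Gamma_0:
  assumes "a > 0" shows "upper_reg_Gamma a 0 = 1"
proof -
  have "Gamma a \<noteq> 0"
    using Gamma_real_pos[OF assms] by linarith
  then show ?thesis
    by (simp add: upper_reg_Gamma_def upper_inc_Gamma_0[OF assms])
qed

lemma upper_reg_Gamma_mono_shape:
  assumes "0 < a" "a \<le> b" "0 \<le> y"
  shows "upper_reg_Gamma a y \<le> upper_reg_Gamma b y"
proof -
  \<comment> \<open>The density ratio \<open>t\<^sup>b\<^sup>-\<^sup>a\<close> is at most \<open>r\<close> below \<open>y\<close> and at least \<open>r\<close> above \<open>y\<close>;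
    cross-multiplying the two resulting bounds compares the tail fractions.\<close>
  have "0 < b" using assms by simp
  define r where "r = y powr (b - a)"
  define Ua Ub where "Ua = upper_inc_Gamma a y" and "Ub = upper_inc_Gamma b y"
  have nonneg: "0 \<le> Ua" "0 \<le> Ub" "0 \<le> r" "Ua \<le> Gamma a" "Ub \<le> Gamma b"
    using upper_inc_Gamma_le_Gamma[OF assms(1,3)] upper_inc_Gamma_le_Gamma[OF \<open>0 < b\<close> assms(3)]
    by (simp_all add: Ua_def Ub_def r_def upper_inc_Gamma_nonneg)
  have "ennreal (Gamma b - Ub) \<le> ennreal r * ennreal (Gamma a - Ua)"
    using Gamma_integral_on_le_scaled[of "{0..<y}" b a r] assms
    by (simp add: Ua_def Ub_def r_def Gamma_integral_on_Ico \<open>0 < b\<close> powr_mono2)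
  then have lower: "Gamma b - Ub \<le> r * (Gamma a - Ua)"
    using nonneg by (simp add: ennreal_mult'[symmetric] ennreal_le_iff)
  have "ennreal r * ennreal Ua \<le> ennreal Ub"
    using Gamma_integral_on_ge_scaled[of "{y..}" r b a] assms
    by (simp add: Ua_def Ub_def r_def ennreal_upper_inc_Gamma \<open>0 < b\<close> powr_mono2)
  then have upper: "r * Ua \<le> Ub"
    using nonneg by (simp add: ennreal_mult'[symmetric])
  have "Ua * (Gamma b - Ub) \<le> (r * Ua) * (Gamma a - Ua)"
    using mult_left_mono[OF lower nonneg(1)] by (simp add: ac_simps)
  also have "\<dots> \<le> Ub * (Gamma a - Ua)"
    using upper nonneg by (intro mult_right_mono) auto
  finally have "Ua * Gamma b \<le> Ub * Gamma a"
    by (simp add: algebra_simps)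
  then show ?thesis
    using Gamma_real_pos[OF assms(1)] Gamma_real_pos[OF \<open>0 < b\<close>]
    by (simp add: upper_reg_Gamma_def Ua_def Ub_def divide_simps mult.commute)
qed

text \<open>Survival function of the Erlang distribution of shape \<open>n\<close> and rate 1, i.e. the probability
  of fewer than \<open>n\<close> events of a Poisson variable with mean \<open>y\<close> (the library's \<open>erlang_CDF k\<close>
  has shape \<open>k + 1\<close>).\<close>
definition erlang_ccdf :: "nat \<Rightarrow> real \<Rightarrow> real" where
  "erlang_ccdf n y = exp (- y) * (\<Sum>m<n. y ^ m / fact m)"

lemma isCont_erlang_ccdf: "isCont (erlang_ccdf n) y"
  unfolding erlang_ccdf_def by (intro continuous_intros) auto

lemma erlang_ccdf_0: "erlang_ccdf (Suc n) 0 = 1"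
  unfolding erlang_ccdf_def by (simp add: sum.lessThan_Suc_shift del: sum.lessThan_Suc)

lemma upper_reg_Gamma_of_nat:
  assumes "y \<ge> 0"
  shows "upper_reg_Gamma (real (Suc j)) y = erlang_ccdf (Suc j) y"
proof -
  have Gamma: "Gamma (real (Suc j)) = fact j"
    using Gamma_fact[of j, where 'a=real] by (simp add: add.commute)
  have "ennreal (fact j - upper_inc_Gamma (real (Suc j)) y)
      = Gamma_integral_on (real (Suc j)) {0..<y}"
    using Gamma_integral_on_Ico[of "real (Suc j)" y] assms by (simp add: Gamma_fact)
  also have "\<dots> = (\<integral>\<^sup>+ t. ennreal (t ^ j * exp (- t)) * indicator {0..y} t \<partial>lborel)"
    \<comment> \<open>the integrands differ at \<open>t = 0\<close> (where \<open>0 powr 0 = 0\<close> but \<open>0 ^ 0 = 1\<close>) and at \<open>t = y\<close>\<close>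
    unfolding Gamma_integral_on_def
    using AE_lborel_singleton[of 0] AE_lborel_singleton[of y]
    by (intro nn_integral_cong_AE, eventually_elim) (auto split: split_indicator simp: powr_realpow)
  also have "\<dots> = ennreal ((1 - (\<Sum>n\<le>j. y ^ n * exp (- y) / fact n)) * fact j)"
    using nn_intergal_power_times_exp_Icc[OF assms] by simp
  finally have "fact j - upper_inc_Gamma (real (Suc j)) y
      = (1 - (\<Sum>n\<le>j. y ^ n * exp (- y) / fact n)) * fact j"
    using upper_inc_Gamma_le_Gamma[of "real (Suc j)" y] erlang_CDF_nonneg[of 1 j y] assms
    by (subst (asm) ennreal_inj) (auto simp: Gamma_fact erlang_CDF_def)
  then show ?thesis
    unfolding upper_reg_Gamma_def erlang_ccdf_def Gamma
    by (simp add: lessThan_Suc_atMost sum_distrib_left field_simps)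
qed

lemma erlang_ccdf_floor_le_upper_reg_Gamma:
  assumes "k > 0" "y \<ge> 0"
  shows "erlang_ccdf (nat \<lfloor>k\<rfloor>) y \<le> upper_reg_Gamma k y"
proof (cases "nat \<lfloor>k\<rfloor>")
  case 0
  then show ?thesis
    using upper_inc_Gamma_nonneg[of k y] Gamma_real_pos[OF assms(1)]
    by (simp add: erlang_ccdf_def upper_reg_Gamma_def)
next
  case (Suc j)
  then have "upper_reg_Gamma (real (Suc j)) y \<le> upper_reg_Gamma k y"
    using assms by (intro upper_reg_Gamma_mono_shape) linarith+
  then show ?thesis
    using upper_reg_Gamma_of_nat[OF assms(2)] Suc by simp
qed

lemma upper_reg_Gamma_le_erlang_ccdf_ceiling:
  assumes "k > 0" "y \<ge> 0"
  shows "upper_reg_Gamma k y \<le> erlang_ccdf (nat \<lceil>k\<rceil>) y"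
proof -
  have "0 < nat \<lceil>k\<rceil>"
    using assms(1) by simp
  then obtain j where j: "nat \<lceil>k\<rceil> = Suc j"
    using gr0_implies_Suc by blast
  then have "upper_reg_Gamma k y \<le> upper_reg_Gamma (real (Suc j)) y"
    using assms by (intro upper_reg_Gamma_mono_shape) linarith+
  then show ?thesis
    using upper_reg_Gamma_of_nat[OF assms(2)] j by simp
qed

lemma (in prob_space)
  assumes "indep_var N1 X N2 Y" "A \<in> sets (N1 \<Otimes>\<^sub>M N2)"
  shows integrable_prob_indep_slice:
      "integrable M (\<lambda>\<omega>. prob {\<omega>' \<in> space M. (X \<omega>, Y \<omega>') \<in> A})"
    and prob_indep_pair_eq_integral:
      "prob {\<omega> \<in> space M. (X \<omega>, Y \<omega>) \<in> A}
        = (\<integral>\<omega>. prob {\<omega>' \<in> space M. (X \<omega>, Y \<omega>') \<in> A} \<partial>M)"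
proof -
  have [measurable]: "X \<in> M \<rightarrow>\<^sub>M N1" "Y \<in> M \<rightarrow>\<^sub>M N2"
    and product: "distr M N1 X \<Otimes>\<^sub>M distr M N2 Y = distr M (N1 \<Otimes>\<^sub>M N2) (\<lambda>\<omega>. (X \<omega>, Y \<omega>))"
    using assms(1) by (auto simp: indep_var_distribution_eq)
  interpret Y: prob_space "distr M N2 Y"
    by (rule prob_space_distr) simp
  define F where "F x = Y.prob (Pair x -` A)" for x
  have "(\<lambda>x. emeasure (distr M N2 Y) (Pair x -` A)) \<in> borel_measurable N1"
    using assms(2) by (intro Y.measurable_emeasure_Pair) simp
  then have [measurable]: "F \<in> borel_measurable N1"
    unfolding F_def measure_def by measurable
  have F_eq: "F x = prob {\<omega>' \<in> space M. (x, Y \<omega>') \<in> A}" for x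
    unfolding F_def using assms(2) by (subst measure_distr) (auto intro: arg_cong[where f=prob])
  show integrable: "integrable M (\<lambda>\<omega>. prob {\<omega>' \<in> space M. (X \<omega>, Y \<omega>') \<in> A})"
    unfolding F_eq[symmetric]
  proof (rule integrable_const_bound[where B=1])
    show "AE \<omega> in M. norm (F (X \<omega>)) \<le> 1"
      by (simp add: F_def)
  qed measurable
  have "emeasure M {\<omega> \<in> space M. (X \<omega>, Y \<omega>) \<in> A}
      = emeasure (distr M (N1 \<Otimes>\<^sub>M N2) (\<lambda>\<omega>. (X \<omega>, Y \<omega>))) A"
    using assms(2) by (subst emeasure_distr) (auto intro: arg_cong[where f="emeasure M"])
  also have "\<dots> = (\<integral>\<^sup>+ x. emeasure (distr M N2 Y) (Pair x -` A) \<partial>distr M N1 X)"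
    unfolding product[symmetric] using assms(2) by (intro Y.emeasure_pair_measure_alt) simp
  also have "\<dots> = (\<integral>\<^sup>+ x. ennreal (F x) \<partial>distr M N1 X)"
    by (simp add: Y.emeasure_eq_measure F_def)
  also have "\<dots> = (\<integral>\<^sup>+ \<omega>. ennreal (F (X \<omega>)) \<partial>M)"
    by (intro nn_integral_distr) auto
  also have "\<dots> = ennreal (\<integral>\<omega>. F (X \<omega>) \<partial>M)"
    using integrable unfolding F_eq[symmetric] by (intro nn_integral_eq_integral) (auto simp: F_def)
  finally show "prob {\<omega> \<in> space M. (X \<omega>, Y \<omega>) \<in> A}
      = (\<integral>\<omega>. prob {\<omega>' \<in> space M. (X \<omega>, Y \<omega>') \<in> A} \<partial>M)"
    unfolding F_eq by (simp add: emeasure_eq_measure integral_nonneg)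
qed

lemma power_div_fact_le_exp:
  fixes x :: real
  assumes "0 \<le> x"
  shows "x ^ n / fact n \<le> exp x"
proof -
  have "(\<Sum>i\<in>{n}. x ^ i / fact i) \<le> (\<Sum>i. x ^ i / fact i)"
    using assms summable_exp_generic[of x]
    by (intro sum_le_suminf) (auto simp: divide_inverse mult.commute)
  then show ?thesis
    by (simp add: exp_def divide_inverse mult.commute)
qed

lemma power_mult_exp_neg_le:
  fixes p s :: real
  assumes "0 \<le> p" "0 < s"
  shows "p ^ m * exp (- s * p) \<le> fact m / s ^ m"
proof -
  have "(s * p) ^ m / fact m \<le> exp (s * p)"
    using assms by (intro power_div_fact_le_exp) simp
  then show ?thesis
    using assms by (simp add: exp_minus power_mult_distrib field_simps)
qed

lemma (in finite_measure) integrable_power_mult_exp_neg: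
  fixes P :: "'a \<Rightarrow> real"
  assumes [measurable]: "P \<in> borel_measurable M" and "AE \<omega> in M. 0 \<le> P \<omega>" "0 < s"
  shows "integrable M (\<lambda>\<omega>. P \<omega> ^ m * exp (- s * P \<omega>))"
proof (rule integrable_const_bound[where B="fact m / s ^ m"])
  show "AE \<omega> in M. norm (P \<omega> ^ m * exp (- s * P \<omega>)) \<le> fact m / s ^ m"
    using assms(2) by eventually_elim (use assms(3) power_mult_exp_neg_le in auto)
qed measurable

lemma (in finite_measure)
  fixes P :: "'a \<Rightarrow> real"
  assumes [measurable]: "P \<in> borel_measurable M" and "AE \<omega> in M. 0 \<le> P \<omega>" "0 < \<theta> * \<beta>"
  shows integrable_erlang_ccdf: "integrable M (\<lambda>\<omega>. erlang_ccdf n (P \<omega> / (\<theta> * \<beta>)))"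
    and S_sum_eq_integral_erlang_ccdf:
      "S_sum M P \<theta> \<beta> n = (\<integral>\<omega>. erlang_ccdf n (P \<omega> / (\<theta> * \<beta>)) \<partial>M)"
proof -
  define s where "s = \<theta> * \<beta>"
  have expand: "erlang_ccdf n (p / s)
      = (\<Sum>m<n. p ^ m * exp (- (1 / s) * p) * (s powi - int m / fact m))" for p
    unfolding erlang_ccdf_def sum_distrib_left
    by (intro sum.cong) (auto simp: power_int_minus power_divide field_simps)
  have integrable:
    "integrable M (\<lambda>\<omega>. P \<omega> ^ m * exp (- (1 / s) * P \<omega>) * (s powi - int m / fact m))" for m
    using integrable_power_mult_exp_neg[OF assms(1,2), of "1 / s" m] assms(3) by (simp add: s_def)
  show "integrable M (\<lambda>\<omega>. erlang_ccdf n (P \<omega> / (\<theta> * \<beta>)))"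
    unfolding s_def[symmetric] expand using integrable by (rule Bochner_Integration.integrable_sum)
  show "S_sum M P \<theta> \<beta> n = (\<integral>\<omega>. erlang_ccdf n (P \<omega> / (\<theta> * \<beta>)) \<partial>M)"
    unfolding s_def[symmetric] expand S_sum_def laplace_deriv_def
    by (subst Bochner_Integration.integral_sum) (use integrable in \<open>simp_all add: s_def\<close>)
qed

lemma divide_le_iff_le_divide_pos:
  fixes p j \<beta> :: real
  assumes "0 < j" "0 < \<beta>"
  shows "p / j \<le> \<beta> \<longleftrightarrow> p / \<beta> \<le> j"
  using assms by (simp add: field_simps)

locale gamma_distributed = prob_space +
  fixes J :: "'a \<Rightarrow> real" and k \<theta> :: real
  assumes measurable_J[measurable]: "J \<in> borel_measurable M"
    and shape_pos: "0 < k" and scale_pos: "0 < \<theta>"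
    and prob_J_le:
      "\<And>z. 0 \<le> z \<Longrightarrow> prob {\<omega> \<in> space M. J \<omega> \<le> z} = 1 - upper_reg_Gamma k (z / \<theta>)"
begin

lemma prob_J_gt:
  assumes "0 \<le> x" shows "prob {\<omega> \<in> space M. x < J \<omega>} = upper_reg_Gamma k (x / \<theta>)"
proof -
  have "{\<omega> \<in> space M. x < J \<omega>} = space M - {\<omega> \<in> space M. J \<omega> \<le> x}"
    by auto
  then show ?thesis
    using prob_compl[of "{\<omega> \<in> space M. J \<omega> \<le> x}"] prob_J_le[OF assms] by simp
qed

lemma prob_J_nonpos: "prob {\<omega> \<in> space M. J \<omega> \<le> 0} = 0"
  using prob_J_le[of 0] upper_reg_Gamma_0[OF shape_pos] by simp

lemma prob_J_ge_le_erlang_ccdf: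
  assumes "0 \<le> x"
  shows "prob {\<omega> \<in> space M. x \<le> J \<omega>} \<le> erlang_ccdf (nat \<lceil>k\<rceil>) (x / \<theta>)"
proof (cases "x = 0")
  case True
  have "0 < nat \<lceil>k\<rceil>"
    using shape_pos by simp
  then show ?thesis
    using True by (auto simp: gr0_conv_Suc erlang_ccdf_0)
next
  case False
  \<comment> \<open>Bound by \<open>prob {x' < J}\<close> for \<open>x' < x\<close> and let \<open>x' \<rightarrow> x\<close>, using continuity of the bound.\<close>
  then have "0 < x" using assms by simp
  have "((\<lambda>x'. erlang_ccdf (nat \<lceil>k\<rceil>) (x' / \<theta>)) \<longlongrightarrow> erlang_ccdf (nat \<lceil>k\<rceil>) (x / \<theta>))
      (at_left x)"
    using scale_pos
    by (intro tendsto_within_subset[OF isCont_tendsto_compose[OF isCont_erlang_ccdf]] tendsto_intros)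
      auto
  moreover have "\<forall>\<^sub>F x' in at_left x.
      prob {\<omega> \<in> space M. x \<le> J \<omega>} \<le> erlang_ccdf (nat \<lceil>k\<rceil>) (x' / \<theta>)"
    using eventually_at_left_real[OF \<open>0 < x\<close>]
  proof eventually_elim
    case (elim x')
    then have "prob {\<omega> \<in> space M. x \<le> J \<omega>} \<le> prob {\<omega> \<in> space M. x' < J \<omega>}"
      by (intro finite_measure_mono) auto
    also have "\<dots> = upper_reg_Gamma k (x' / \<theta>)"
      using elim by (intro prob_J_gt) simp
    also have "\<dots> \<le> erlang_ccdf (nat \<lceil>k\<rceil>) (x' / \<theta>)"
      using elim scale_pos shape_pos by (intro upper_reg_Gamma_le_erlang_ccdf_ceiling) auto
    finally show ?case .
  qed
  ultimately show ?thesis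
    by (intro tendsto_le[OF _ _ tendsto_const]) auto
qed

lemma erlang_ccdf_floor_le_prob_ratio:
  assumes "0 \<le> p" "0 < \<beta>"
  shows "erlang_ccdf (nat \<lfloor>k\<rfloor>) (p / (\<theta> * \<beta>)) \<le> prob {\<omega> \<in> space M. p / J \<omega> \<le> \<beta>}"
proof -
  have "erlang_ccdf (nat \<lfloor>k\<rfloor>) (p / (\<theta> * \<beta>)) \<le> upper_reg_Gamma k ((p / \<beta>) / \<theta>)"
    using assms shape_pos scale_pos erlang_ccdf_floor_le_upper_reg_Gamma[of k "p / (\<theta> * \<beta>)"]
    by (simp add: mult.commute)
  also have "\<dots> = prob {\<omega> \<in> space M. p / \<beta> < J \<omega>}"
    using assms by (intro prob_J_gt[symmetric]) simp
  also have "\<dots> \<le> prob {\<omega> \<in> space M. p / J \<omega> \<le> \<beta>}"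
  proof (intro finite_measure_mono subsetI)
    fix \<omega> assume \<omega>: "\<omega> \<in> {\<omega> \<in> space M. p / \<beta> < J \<omega>}"
    moreover have "0 \<le> p / \<beta>" using assms by simp
    ultimately have "0 < J \<omega>" by simp
    then show "\<omega> \<in> {\<omega> \<in> space M. p / J \<omega> \<le> \<beta>}"
      using \<omega> assms by (simp add: divide_le_iff_le_divide_pos)
  qed simp
  finally show ?thesis .
qed

lemma prob_ratio_le_erlang_ccdf_ceiling:
  assumes "0 \<le> p" "0 < \<beta>"
  shows "prob {\<omega> \<in> space M. p / J \<omega> \<le> \<beta>} \<le> erlang_ccdf (nat \<lceil>k\<rceil>) (p / (\<theta> * \<beta>))"
proof -
  \<comment> \<open>The null event \<open>J \<le> 0\<close> absorbs the junk value \<open>p / 0 = 0\<close>.\<close>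
  have "prob {\<omega> \<in> space M. p / J \<omega> \<le> \<beta>}
      \<le> prob ({\<omega> \<in> space M. J \<omega> \<le> 0} \<union> {\<omega> \<in> space M. p / \<beta> \<le> J \<omega>})"
  proof (intro finite_measure_mono subsetI)
    fix \<omega> assume "\<omega> \<in> {\<omega> \<in> space M. p / J \<omega> \<le> \<beta>}"
    then show "\<omega> \<in> {\<omega> \<in> space M. J \<omega> \<le> 0} \<union> {\<omega> \<in> space M. p / \<beta> \<le> J \<omega>}"
      using assms(2) by (cases "J \<omega> \<le> 0") (auto simp: divide_le_iff_le_divide_pos)
  qed simp
  also have "\<dots> \<le> prob {\<omega> \<in> space M. J \<omega> \<le> 0} + prob {\<omega> \<in> space M. p / \<beta> \<le> J \<omega>}"
    by (intro measure_Un_le) auto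
  also have "\<dots> \<le> erlang_ccdf (nat \<lceil>k\<rceil>) ((p / \<beta>) / \<theta>)"
    using prob_J_nonpos prob_J_ge_le_erlang_ccdf[of "p / \<beta>"] assms by simp
  finally show ?thesis
    by (simp add: mult.commute)
qed

end

theorem theorem1:
  fixes M :: "'a measure" and P J :: "'a \<Rightarrow> real" and k \<theta> \<beta> :: real
  assumes "prob_space M"
    and "P \<in> borel_measurable M" and "J \<in> borel_measurable M"
    and "AE \<omega> in M. P \<omega> \<ge> 0"
    and "k > 0" and "\<theta> > 0"
    and "\<And>z. z \<ge> 0 \<Longrightarrow>
           measure M {\<omega> \<in> space M. J \<omega> \<le> z} = 1 - upper_inc_Gamma k (z / \<theta>) / Gamma k"
    and "\<And>z. z < 0 \<Longrightarrow> measure M {\<omega> \<in> space M. J \<omega> \<le> z} = 0"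
    and "prob_space.indep_var M borel P borel J"
    and "\<beta> > 0"
  shows "S_sum M P \<theta> \<beta> (nat \<lfloor>k\<rfloor>) \<le> measure M {\<omega> \<in> space M. P \<omega> / J \<omega> \<le> \<beta>}
         \<and> measure M {\<omega> \<in> space M. P \<omega> / J \<omega> \<le> \<beta>} \<le> S_sum M P \<theta> \<beta> (nat \<lceil>k\<rceil>)"
proof -
  interpret gamma_distributed M J k \<theta>
    unfolding gamma_distributed_def gamma_distributed_axioms_def upper_reg_Gamma_def
    using assms(1,3,5,6,7) by simp
  define A where "A = {x \<in> space (borel \<Otimes>\<^sub>M borel). fst x / snd x \<le> \<beta>}"
  have A: "A \<in> sets (borel \<Otimes>\<^sub>M borel)"
    unfolding A_def by measurable
  have integrable: "integrable M (\<lambda>\<omega>. prob {\<omega>' \<in> space M. P \<omega> / J \<omega>' \<le> \<beta>})"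
    and ratio: "prob {\<omega> \<in> space M. P \<omega> / J \<omega> \<le> \<beta>}
      = (\<integral>\<omega>. prob {\<omega>' \<in> space M. P \<omega> / J \<omega>' \<le> \<beta>} \<partial>M)"
    using integrable_prob_indep_slice[OF assms(9) A] prob_indep_pair_eq_integral[OF assms(9) A]
    by (simp_all add: A_def space_pair_measure)
  have "0 < \<theta> * \<beta>"
    using assms(6,10) by simp
  note S_sum = S_sum_eq_integral_erlang_ccdf[OF assms(2,4) this]
    and integrable_erlang = integrable_erlang_ccdf[OF assms(2,4) this]
  have "(\<integral>\<omega>. erlang_ccdf (nat \<lfloor>k\<rfloor>) (P \<omega> / (\<theta> * \<beta>)) \<partial>M)
      \<le> (\<integral>\<omega>. prob {\<omega>' \<in> space M. P \<omega> / J \<omega>' \<le> \<beta>} \<partial>M)"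
    by (intro integral_mono_AE[OF integrable_erlang integrable])
      (use assms(4) in \<open>eventually_elim, simp add: erlang_ccdf_floor_le_prob_ratio assms(10)\<close>)
  moreover have "(\<integral>\<omega>. prob {\<omega>' \<in> space M. P \<omega> / J \<omega>' \<le> \<beta>} \<partial>M)
      \<le> (\<integral>\<omega>. erlang_ccdf (nat \<lceil>k\<rceil>) (P \<omega> / (\<theta> * \<beta>)) \<partial>M)"
    by (intro integral_mono_AE[OF integrable integrable_erlang])
      (use assms(4) in \<open>eventually_elim, simp add: prob_ratio_le_erlang_ccdf_ceiling assms(10)\<close>)
  ultimately show ?thesis
    unfolding ratio S_sum by simp
qed

end
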